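(* Let $\mathcal{D}=\{1,\dots,n\}$ and let $U:2^{\mathcal{D}}\to\mathbb{R}_{\ge0}$ be monotone submodular with $U(\emptyset)=0$, $U(\{i\})>0$ for all $i$, and curvature $c\in[0,1]$. Let $v$ be a weighted-marginal data value as defined in the context (e.g. any semi-value, Data Shapley, Data Banzhaf, or leave-one-out). Order $\mathcal{D}$ in decreasing order of $v$ (ties broken arbitrarily) and let $G_k$ be the set of the first $k$ elements. For each $k$ let $OPT_k\in\operatorname{argmax}_{S\subseteq\mathcal{D},|S|\le k}U(S)$. Then for every $k\in\{1,\dots,n\}$, $$U(G_k)\ge(1-c)^2\,U(OPT_k),$$ and consequently, for every $K\le n$, $$\sum_{k=1}^K U(G_k)\ge (1-c)^2\sum_{k=1}^K U(OPT_k).$$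
   Context: $U$ is monotone if $U(A)\le U(B)$ whenever $A\subseteq B$, and submodular if $U(A\cup\{i\})-U(A)\ge U(B\cup\{i\})-U(B)$ whenever $A\subseteq B\subseteq\mathcal{D}$ and $i\in\mathcal{D}\setminus B$. The curvature of $U$ is $c=1-\min_{i\in\mathcal{D}}\frac{U(\mathcal{D})-U(\mathcal{D}\setminus\{i\})}{U(\{i\})}$. A weighted-marginal data value is $v(i)=\sum_{S\subseteq\mathcal{D}\setminus\{i\}}w_i(S)\,[U(S\cup\{i\})-U(S)]$, where for each $i$ the weights satisfy $w_i(S)\ge0$ and $\sum_{S\subseteq\mathcal{D}\setminus\{i\}}w_i(S)=1$. (Semi-values are the case $w_i(S)=\beta_{|S|}$ with $\beta_k\ge0$, $\sum_{k=0}^{n-1}\binom{n-1}{k}\beta_k=1$; leave-one-out is $w_i(S)=1$ iff $S=\mathcal{D}\setminus\{i\}$.) *)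

theory Defs
  imports Complex_Main
begin

definition monotone_setfun :: "'a set \<Rightarrow> ('a set \<Rightarrow> real) \<Rightarrow> bool" where
  "monotone_setfun D U \<longleftrightarrow> (\<forall>A B. A \<subseteq> B \<and> B \<subseteq> D \<longrightarrow> U A \<le> U B)"

definition submodular_setfun :: "'a set \<Rightarrow> ('a set \<Rightarrow> real) \<Rightarrow> bool" where
  "submodular_setfun D U \<longleftrightarrow>
     (\<forall>A B i. A \<subseteq> B \<and> B \<subseteq> D \<and> i \<in> D - B \<longrightarrow>
        U (A \<union> {i}) - U A \<ge> U (B \<union> {i}) - U B)"

definition curvature :: "'a set \<Rightarrow> ('a set \<Rightarrow> real) \<Rightarrow> real" where
  "curvature D U = 1 - Min ((\<lambda>i. (U D - U (D - {i})) / U {i}) ` D)"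

definition valid_weights :: "'a set \<Rightarrow> ('a \<Rightarrow> 'a set \<Rightarrow> real) \<Rightarrow> bool" where
  "valid_weights D w \<longleftrightarrow>
     (\<forall>i\<in>D. (\<forall>S\<in>Pow (D - {i}). w i S \<ge> 0) \<and> (\<Sum>S\<in>Pow (D - {i}). w i S) = 1)"

definition wm_value :: "'a set \<Rightarrow> ('a set \<Rightarrow> real) \<Rightarrow> ('a \<Rightarrow> 'a set \<Rightarrow> real) \<Rightarrow> 'a \<Rightarrow> real" where
  "wm_value D U w i = (\<Sum>S\<in>Pow (D - {i}). w i S * (U (S \<union> {i}) - U S))"

definition is_opt :: "'a set \<Rightarrow> ('a set \<Rightarrow> real) \<Rightarrow> nat \<Rightarrow> 'a set \<Rightarrow> bool" where
  "is_opt D U k S \<longleftrightarrow> S \<subseteq> D \<and> card S \<le> k \<and>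
     (\<forall>T. T \<subseteq> D \<and> card T \<le> k \<longrightarrow> U T \<le> U S)"

end

theory Submission
  imports Defs
begin

text \<open>Submodularity squeezes every marginal gain of \<open>i\<close> between the last gain
  \<open>U D - U (D - {i})\<close>, which is at least \<open>(1 - c) U {i}\<close>, and the first gain \<open>U {i}\<close>.
  A weighted-marginal value is an average of such gains, so \<open>v\<close> approximates the
  additive surrogate \<open>i \<mapsto> U {i}\<close> within a factor \<open>1 - c\<close>, and so does \<open>U\<close> itself on
  every subset.  The greedy prefix maximises the total of \<open>v\<close> among sets of size \<open>k\<close>;
  passing from \<open>U\<close> to \<open>v\<close> on \<open>OPT\<^sub>k\<close> and from \<open>v\<close> back to \<open>U\<close> on \<open>G\<^sub>k\<close> loses one
  factor \<open>1 - c\<close> each.\<close>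

lemma submodular_marginal_antimono:
  assumes "submodular_setfun D U" "A \<subseteq> B" "B \<subseteq> D" "i \<in> D - B"
  shows "U (B \<union> {i}) - U B \<le> U (A \<union> {i}) - U A"
  using assms unfolding submodular_setfun_def by blast

lemma submodular_marginal_le_singleton:
  assumes "submodular_setfun D U" "U {} = 0" "S \<subseteq> D - {i}" "i \<in> D"
  shows "U (S \<union> {i}) - U S \<le> U {i}"
  using submodular_marginal_antimono[OF assms(1), of "{}" S i] assms by auto

lemma submodular_marginal_ge_last_marginal:
  assumes "submodular_setfun D U" "S \<subseteq> D - {i}" "i \<in> D"
  shows "U D - U (D - {i}) \<le> U (S \<union> {i}) - U S"
proof -
  have "D - {i} \<union> {i} = D" using assms(3) by auto
  then show ?thesis
    using submodular_marginal_antimono[OF assms(1), of S "D - {i}" i] assms by auto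
qed

lemma last_marginal_ge_curvature:
  assumes "finite D" "i \<in> D" "U {i} > 0"
  shows "(1 - curvature D U) * U {i} \<le> U D - U (D - {i})"
proof -
  have "Min ((\<lambda>i. (U D - U (D - {i})) / U {i}) ` D) \<le> (U D - U (D - {i})) / U {i}"
    using assms by (intro Min_le) auto
  then have "1 - curvature D U \<le> (U D - U (D - {i})) / U {i}"
    unfolding curvature_def by simp
  then show ?thesis using assms(3) by (simp add: pos_le_divide_eq)
qed

lemma submodular_le_sum_singletons:
  assumes "submodular_setfun D U" "U {} = 0" "S \<subseteq> D" "finite S"
  shows "U S \<le> (\<Sum>i\<in>S. U {i})"
  using assms(4,3)
proof (induction S rule: finite_induct)
  case empty
  then show ?case using assms(2) by simp
next
  case (insert x F)
  have "U (F \<union> {x}) - U F \<le> U {x}"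
    using insert by (intro submodular_marginal_le_singleton[OF assms(1,2)]) auto
  then show ?case using insert by simp
qed

lemma curvature_sum_singletons_le:
  assumes "submodular_setfun D U" "U {} = 0" "finite D" "\<forall>i\<in>D. U {i} > 0" "S \<subseteq> D"
  shows "(1 - curvature D U) * (\<Sum>i\<in>S. U {i}) \<le> U S"
proof -
  have "finite S" using assms(3,5) finite_subset by blast
  then show ?thesis using assms(5)
  proof (induction S rule: finite_induct)
    case empty
    then show ?case using assms(2) by simp
  next
    case (insert x F)
    have "(1 - curvature D U) * U {x} \<le> U D - U (D - {x})"
      using insert assms(3,4) by (intro last_marginal_ge_curvature) auto
    also have "\<dots> \<le> U (F \<union> {x}) - U F"
      using insert by (intro submodular_marginal_ge_last_marginal[OF assms(1)]) auto
    finally show ?case using insert by (simp add: algebra_simps)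
  qed
qed

lemma convex_combination_bounds:
  fixes p x :: "'b \<Rightarrow> real"
  assumes "\<forall>s\<in>A. 0 \<le> p s" "(\<Sum>s\<in>A. p s) = 1" "\<forall>s\<in>A. a \<le> x s \<and> x s \<le> b"
  shows "a \<le> (\<Sum>s\<in>A. p s * x s) \<and> (\<Sum>s\<in>A. p s * x s) \<le> b"
proof
  have "a = (\<Sum>s\<in>A. p s * a)" using assms(2) by (simp add: sum_distrib_right[symmetric])
  also have "\<dots> \<le> (\<Sum>s\<in>A. p s * x s)" using assms(1,3) by (intro sum_mono mult_left_mono) auto
  finally show "a \<le> (\<Sum>s\<in>A. p s * x s)" .
  have "(\<Sum>s\<in>A. p s * x s) \<le> (\<Sum>s\<in>A. p s * b)"
    using assms(1,3) by (intro sum_mono mult_left_mono) auto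
  also have "\<dots> = b" using assms(2) by (simp add: sum_distrib_right[symmetric])
  finally show "(\<Sum>s\<in>A. p s * x s) \<le> b" .
qed

lemma wm_value_curvature_bounds:
  assumes "submodular_setfun D U" "U {} = 0" "finite D" "\<forall>i\<in>D. U {i} > 0"
    "valid_weights D w" "i \<in> D"
  shows "(1 - curvature D U) * U {i} \<le> wm_value D U w i \<and> wm_value D U w i \<le> U {i}"
proof -
  have "(1 - curvature D U) * U {i} \<le> U (S \<union> {i}) - U S \<and> U (S \<union> {i}) - U S \<le> U {i}"
    if "S \<in> Pow (D - {i})" for S
  proof
    show "(1 - curvature D U) * U {i} \<le> U (S \<union> {i}) - U S"
      using last_marginal_ge_curvature[OF assms(3,6)] assms(4,6)
        submodular_marginal_ge_last_marginal[OF assms(1) _ assms(6), of S] that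
      by fastforce
    show "U (S \<union> {i}) - U S \<le> U {i}"
      using submodular_marginal_le_singleton[OF assms(1,2) _ assms(6), of S] that by blast
  qed
  then show ?thesis
    using assms(5,6) unfolding valid_weights_def wm_value_def
    by (intro convex_combination_bounds) auto
qed

text \<open>Exchange argument: the indices of \<open>J\<close> beyond \<open>k\<close> are no more numerous than the
  indices of \<open>{1..k}\<close> missing from \<open>J\<close>, and each of them carries a smaller value.\<close>

lemma sum_antitone_le_prefix:
  fixes f :: "nat \<Rightarrow> real"
  assumes anti: "\<forall>j\<in>{1..n}. \<forall>l\<in>{1..n}. j \<le> l \<longrightarrow> f l \<le> f j"
    and nonneg: "\<forall>j\<in>{1..n}. 0 \<le> f j"
    and J: "J \<subseteq> {1..n}" "card J \<le> k" and k: "k \<in> {1..n}"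
  shows "(\<Sum>j\<in>J. f j) \<le> (\<Sum>j\<in>{1..k}. f j)"
proof -
  have fin: "finite J" using J(1) finite_subset by blast
  let ?A = "J - {1..k}" and ?B = "{1..k} - J" and ?C = "J \<inter> {1..k}"
  have sum_J: "(\<Sum>j\<in>J. f j) = (\<Sum>j\<in>?C. f j) + (\<Sum>j\<in>?A. f j)"
    using sum.Int_Diff[OF fin, of f "{1..k}"] by simp
  have sum_k: "(\<Sum>j\<in>{1..k}. f j) = (\<Sum>j\<in>?C. f j) + (\<Sum>j\<in>?B. f j)"
    using sum.Int_Diff[of "{1..k}" f J] by (simp add: Int_commute)
  have "card J = card ?C + card ?A" using card_Int_Diff[OF fin, of "{1..k}"] by simp
  moreover have "card {1..k} = card ?C + card ?B"
    using card_Int_Diff[of "{1..k}" J] by (simp add: Int_commute)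
  ultimately have card_AB: "card ?A \<le> card ?B" using J(2) by simp
  have "(\<Sum>j\<in>?A. f j) \<le> (\<Sum>j\<in>?A. f k)" using J(1) k anti by (intro sum_mono) auto
  also have "\<dots> = real (card ?A) * f k" by simp
  also have "\<dots> \<le> real (card ?B) * f k" using card_AB nonneg k by (intro mult_right_mono) auto
  also have "\<dots> = (\<Sum>j\<in>?B. f k)" by simp
  also have "\<dots> \<le> (\<Sum>j\<in>?B. f j)" using k anti by (intro sum_mono) auto
  finally show ?thesis using sum_J sum_k by simp
qed

lemma sum_le_sorted_prefix:
  fixes v :: "'a \<Rightarrow> real"
  assumes perm: "bij_betw \<sigma> {1..n} D"
    and sorted: "\<forall>j\<in>{1..n}. \<forall>l\<in>{1..n}. j \<le> l \<longrightarrow> v (\<sigma> l) \<le> v (\<sigma> j)"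
    and nonneg: "\<forall>i\<in>D. 0 \<le> v i"
    and T: "T \<subseteq> D" "card T \<le> k" and k: "k \<in> {1..n}"
  shows "(\<Sum>i\<in>T. v i) \<le> (\<Sum>i\<in>\<sigma> ` {1..k}. v i)"
proof -
  define J where "J = {j\<in>{1..n}. \<sigma> j \<in> T}"
  have inj: "inj_on \<sigma> {1..n}" and img: "\<sigma> ` {1..n} = D"
    using perm by (auto simp: bij_betw_def)
  have J_sub: "J \<subseteq> {1..n}" unfolding J_def by blast
  have T_eq: "T = \<sigma> ` J" unfolding J_def using T(1) img by blast
  have inj_J: "inj_on \<sigma> J" using inj J_sub by (rule inj_on_subset)
  have inj_k: "inj_on \<sigma> {1..k}" using inj by (rule inj_on_subset) (use k in auto)
  have card_J: "card J \<le> k" using T(2) T_eq card_image[OF inj_J] by simp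
  have nonneg_J: "\<forall>j\<in>{1..n}. 0 \<le> v (\<sigma> j)" using nonneg img by blast
  have "(\<Sum>i\<in>T. v i) = (\<Sum>j\<in>J. v (\<sigma> j))" using T_eq sum.reindex[OF inj_J] by simp
  also have "\<dots> \<le> (\<Sum>j\<in>{1..k}. v (\<sigma> j))"
    using sorted nonneg_J J_sub card_J k by (rule sum_antitone_le_prefix)
  also have "\<dots> = (\<Sum>i\<in>\<sigma> ` {1..k}. v i)" unfolding sum.reindex[OF inj_k] by simp
  finally show ?thesis .
qed

lemma curvature_squared_approximation:
  assumes submod: "submodular_setfun D U" and empty: "U {} = 0" and fin: "finite D"
    and single: "\<forall>i\<in>D. U {i} > 0" and c_le: "curvature D U \<le> 1"
    and v_bounds: "\<forall>i\<in>D. (1 - curvature D U) * U {i} \<le> v i \<and> v i \<le> U {i}"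
    and G: "G \<subseteq> D" and T: "T \<subseteq> D"
    and v_sum: "(\<Sum>i\<in>T. v i) \<le> (\<Sum>i\<in>G. v i)"
  shows "(1 - curvature D U)^2 * U T \<le> U G"
proof -
  let ?a = "1 - curvature D U"
  have a_nonneg: "0 \<le> ?a" using c_le by simp
  have "?a * U T \<le> ?a * (\<Sum>i\<in>T. U {i})"
    using submodular_le_sum_singletons[OF submod empty T] T fin finite_subset a_nonneg
    by (intro mult_left_mono) auto
  also have "\<dots> \<le> (\<Sum>i\<in>T. v i)"
    using v_bounds T by (auto simp: sum_distrib_left intro: sum_mono)
  also have "\<dots> \<le> (\<Sum>i\<in>G. v i)" by (fact v_sum)
  also have "\<dots> \<le> (\<Sum>i\<in>G. U {i})" using v_bounds G by (intro sum_mono) auto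
  finally have "?a * (?a * U T) \<le> ?a * (\<Sum>i\<in>G. U {i})" using a_nonneg by (rule mult_left_mono)
  also have "\<dots> \<le> U G" by (rule curvature_sum_singletons_le[OF submod empty fin single G])
  finally show ?thesis by (simp add: power2_eq_square mult.assoc)
qed

theorem theorem4p3:
  fixes n :: nat and U :: "nat set \<Rightarrow> real" and w :: "nat \<Rightarrow> nat set \<Rightarrow> real"
    and \<sigma> :: "nat \<Rightarrow> nat" and OPT :: "nat \<Rightarrow> nat set"
  defines "D \<equiv> {1..n}"
  defines "v \<equiv> wm_value D U w"
  defines "c \<equiv> curvature D U"
  defines "G \<equiv> (\<lambda>k. \<sigma> ` {1..k})"
  assumes nonneg: "\<forall>S\<subseteq>D. U S \<ge> 0"
    and mono: "monotone_setfun D U"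
    and submod: "submodular_setfun D U"
    and empty: "U {} = 0"
    and single: "\<forall>i\<in>D. U {i} > 0"
    and c_range: "0 \<le> c \<and> c \<le> 1"
    and weights: "valid_weights D w"
    and perm: "bij_betw \<sigma> {1..n} D"
    and sorted: "\<forall>j\<in>{1..n}. \<forall>l\<in>{1..n}. j \<le> l \<longrightarrow> v (\<sigma> l) \<le> v (\<sigma> j)"
    and opt: "\<forall>k\<in>{1..n}. is_opt D U k (OPT k)"
  shows "(\<forall>k\<in>{1..n}. U (G k) \<ge> (1 - c)^2 * U (OPT k)) \<and>
         (\<forall>K\<le>n. (\<Sum>k=1..K. U (G k)) \<ge> (1 - c)^2 * (\<Sum>k=1..K. U (OPT k)))"
proof -
  have fin: "finite D" unfolding D_def by simp
  have v_bounds: "\<forall>i\<in>D. (1 - c) * U {i} \<le> v i \<and> v i \<le> U {i}"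
    unfolding v_def c_def using wm_value_curvature_bounds[OF submod empty fin single weights] by blast
  have v_nonneg: "\<forall>i\<in>D. 0 \<le> v i"
  proof
    fix i assume "i \<in> D"
    then have "0 \<le> (1 - c) * U {i}" using single c_range by (simp add: less_imp_le)
    then show "0 \<le> v i" using v_bounds \<open>i \<in> D\<close> by (meson order_trans)
  qed
  have G_sub: "G k \<subseteq> D" if "k \<in> {1..n}" for k
    using that bij_betw_imp_surj_on[OF perm] unfolding G_def by auto
  have per_k: "(1 - c)^2 * U (OPT k) \<le> U (G k)" if k: "k \<in> {1..n}" for k
  proof -
    have OPT: "OPT k \<subseteq> D" "card (OPT k) \<le> k" using opt k unfolding is_opt_def by auto
    have "(\<Sum>i\<in>OPT k. v i) \<le> (\<Sum>i\<in>G k. v i)"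
      unfolding G_def using sum_le_sorted_prefix[OF perm sorted v_nonneg OPT k] .
    then show ?thesis
      using curvature_squared_approximation[OF submod empty fin single _ _ G_sub[OF k] OPT(1)]
        c_range v_bounds unfolding c_def by blast
  qed
  have "(1 - c)^2 * (\<Sum>k=1..K. U (OPT k)) \<le> (\<Sum>k=1..K. U (G k))" if "K \<le> n" for K
    unfolding sum_distrib_left using per_k that by (intro sum_mono) auto
  then show ?thesis using per_k by blast
qed

end
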